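(* Let $n$ be a positive integer, $g=3n+1$, and let $G=\{\ell_1<\dots<\ell_g\}$ be a pure $(2n)$-sparse gapset of genus $g$ with multiplicity $m$ and depth $q\le 3$. Let $\alpha=\max\{i:\ell_{i+1}-\ell_i=2n\}$. Then $\ell_\alpha\le 2m-1$.
   Context: A gapset is a finite set $G\subset\mathbb{N}=\{1,2,\dots\}$ such that whenever $z\in G$ and $z=x+y$ with $x,y\in\mathbb{N}$, then $x\in G$ or $y\in G$; its genus is $g=\#G$. Multiplicity $m(G)=\min\{s\in\mathbb{N}:s\notin G\}$; conductor $c(G)=\min\{s\in\mathbb{N}: s+t\notin G\ \forall t\in\mathbb{N}_0\}$; depth $q(G)=\lceil c(G)/m(G)\rceil$. $G$ is pure $\kappa$-sparse if $\ell_{i+1}-\ell_i\le\kappa$ for all $i$ with equality for some $i$. *)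

theory Defs
  imports Main
begin

definition gapset :: "nat set \<Rightarrow> bool" where
  "gapset G \<longleftrightarrow> finite G \<and> 0 \<notin> G \<and>
     (\<forall>z\<in>G. \<forall>x y. x \<ge> 1 \<and> y \<ge> 1 \<and> z = x + y \<longrightarrow> x \<in> G \<or> y \<in> G)"

definition genus :: "nat set \<Rightarrow> nat" where
  "genus G = card G"

definition multiplicity :: "nat set \<Rightarrow> nat" where
  "multiplicity G = (LEAST s. s \<ge> 1 \<and> s \<notin> G)"

definition conductor :: "nat set \<Rightarrow> nat" where
  "conductor G = (LEAST s. s \<ge> 1 \<and> (\<forall>t. s + t \<notin> G))"

text \<open>depth q = ceiling(c/m), written in nat arithmetic (m is always positive)\<close>
definition depth :: "nat set \<Rightarrow> nat" where
  "depth G = (conductor G + multiplicity G - 1) div multiplicity G"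

text \<open>ell G i is the i-th smallest gap (1-indexed), for 1 \<le> i \<le> card G\<close>
definition ell :: "nat set \<Rightarrow> nat \<Rightarrow> nat" where
  "ell G i = sorted_list_of_set G ! (i - 1)"

definition pure_sparse :: "nat \<Rightarrow> nat set \<Rightarrow> bool" where
  "pure_sparse \<kappa> G \<longleftrightarrow>
     (\<forall>i. 1 \<le> i \<and> i < card G \<longrightarrow> ell G (i+1) - ell G i \<le> \<kappa>) \<and>
     (\<exists>i. 1 \<le> i \<and> i < card G \<and> ell G (i+1) - ell G i = \<kappa>)"

end

theory Submission
  imports Defs
begin

text \<open>
  Let \<open>x = \<ell>\<^sub>\<alpha>\<close> and \<open>y = x + 2n\<close>; both are gaps, and \<open>y < c \<le> 3m\<close> since \<open>q \<le> 3\<close>.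
  If \<open>x \<ge> 2m\<close>, then \<open>y > 2m + 2n\<close> forces \<open>m > 2n\<close>. On the other hand, for each
  \<open>k \<in> [m, y - m]\<close> one of \<open>k\<close>, \<open>y - k\<close> is a gap, so at least half of that interval
  consists of gaps; together with the gaps \<open>1, \<dots>, m - 1\<close> and \<open>x, y\<close> this gives
  \<open>y + 3 \<le> 2g = 6n + 2\<close>, i.e. \<open>x \<le> 4n - 1\<close>, contradicting \<open>x \<ge> 2m > 4n\<close>.
\<close>

lemma ell_mem:
  assumes "finite G" "1 \<le> i" "i \<le> card G"
  shows "ell G i \<in> G"
proof -
  have "i - 1 < length (sorted_list_of_set G)" using assms by simp
  then have "sorted_list_of_set G ! (i - 1) \<in> set (sorted_list_of_set G)" by (rule nth_mem)
  then show ?thesis using assms(1) by (simp add: ell_def)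
qed

lemma not_mem_above_Max:
  assumes "finite (G :: nat set)"
  shows "\<forall>t. Suc (Max (insert 0 G)) + t \<notin> G"
proof (intro allI notI)
  fix t assume "Suc (Max (insert 0 G)) + t \<in> G"
  then have "Suc (Max (insert 0 G)) + t \<le> Max (insert 0 G)"
    using assms by (intro Max_ge) auto
  then show False by simp
qed

lemma multiplicity_ge_1:
  assumes "finite G"
  shows "1 \<le> multiplicity G"
proof -
  have "\<exists>s. s \<ge> 1 \<and> s \<notin> G"
    using not_mem_above_Max[OF assms] by (metis add_0_right le_add1 plus_1_eq_Suc)
  from LeastI_ex[OF this] show ?thesis unfolding multiplicity_def by auto
qed

lemma mem_if_less_multiplicity:
  assumes "1 \<le> k" "k < multiplicity G"
  shows "k \<in> G"
  using assms not_less_Least[of k "\<lambda>s. s \<ge> 1 \<and> s \<notin> G"] unfolding multiplicity_def by blast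

lemma less_conductor_if_mem:
  assumes "finite G" "z \<in> G"
  shows "z < conductor G"
proof (rule ccontr)
  have "\<exists>s. s \<ge> 1 \<and> (\<forall>t. s + t \<notin> G)"
    using not_mem_above_Max[OF assms(1)] by (intro exI[of _ "Suc (Max (insert 0 G))"]) simp
  from LeastI_ex[OF this] have "\<forall>t. conductor G + t \<notin> G"
    unfolding conductor_def by blast
  moreover assume "\<not> z < conductor G"
  ultimately show False
    using assms(2) by (metis le_add_diff_inverse not_less)
qed

lemma conductor_le_if_depth_le:
  assumes "finite G" "depth G \<le> q"
  shows "conductor G \<le> q * multiplicity G"
proof -
  have m: "1 \<le> multiplicity G" using multiplicity_ge_1[OF assms(1)] .
  have "(conductor G + multiplicity G - 1) div multiplicity G < Suc q"
    using assms(2) by (simp add: depth_def)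
  then have "conductor G + multiplicity G - 1 < Suc q * multiplicity G"
    using m div_less_iff_less_mult by simp
  then show ?thesis by simp
qed

lemma card_interval_le_twice_gaps:
  assumes "gapset G" "y \<in> G" "1 \<le> a"
  shows "card {a..y - a} \<le> 2 * card (G \<inter> {a..y - a})"
proof -
  define K where "K = G \<inter> {a..y - a}"
  have "{a..y - a} \<subseteq> K \<union> (\<lambda>k. y - k) ` K"
  proof
    fix k assume k: "k \<in> {a..y - a}"
    show "k \<in> K \<union> (\<lambda>k. y - k) ` K"
    proof (cases "k \<in> G")
      case True then show ?thesis using k K_def by auto
    next
      case False
      have "y = k + (y - k)" "1 \<le> k" "1 \<le> y - k" using k assms(3) by auto
      then have "k \<in> G \<or> y - k \<in> G" using assms(1,2) unfolding gapset_def by blast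
      with False have "y - k \<in> G" by simp
      moreover have "y - k \<in> {a..y - a}" "k = y - (y - k)" using k by auto
      ultimately show ?thesis unfolding K_def by blast
    qed
  qed
  then have "card {a..y - a} \<le> card (K \<union> (\<lambda>k. y - k) ` K)"
    by (intro card_mono) (auto simp: K_def)
  also have "\<dots> \<le> card K + card ((\<lambda>k. y - k) ` K)" by (rule card_Un_le)
  also have "\<dots> \<le> 2 * card K" using card_image_le[of K "\<lambda>k. y - k"] by (simp add: K_def)
  finally show ?thesis unfolding K_def .
qed

lemma twice_genus_ge_if_large_gaps:
  assumes "gapset G" "x \<in> G" "y \<in> G" "x < y"
    and "2 * multiplicity G \<le> x" "y < 3 * multiplicity G"
  shows "y + 3 \<le> 2 * genus G"
proof -
  define m where "m = multiplicity G"
  define K where "K = G \<inter> {m..y - m}"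
  have fin: "finite G" using assms(1) by (simp add: gapset_def)
  have m1: "1 \<le> m" using multiplicity_ge_1[OF fin] by (simp add: m_def)
  have K: "card {m..y - m} \<le> 2 * card K"
    using card_interval_le_twice_gaps[OF assms(1,3) m1] by (simp add: K_def)
  have "{1..<m} \<union> K \<union> {x, y} \<subseteq> G"
    using mem_if_less_multiplicity assms(2,3) by (auto simp: K_def m_def)
  then have "card ({1..<m} \<union> K \<union> {x, y}) \<le> card G" using fin by (rule card_mono[rotated])
  moreover have "card ({1..<m} \<union> K \<union> {x, y}) = (m - 1) + card K + 2"
  proof -
    have "{1..<m} \<inter> K = {}" "({1..<m} \<union> K) \<inter> {x, y} = {}"
      using assms(4-6) by (auto simp: K_def m_def)
    then show ?thesis using assms(4) by (simp add: card_Un_disjoint K_def)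
  qed
  ultimately show ?thesis using K assms(5,6) m1 by (simp add: genus_def m_def)
qed

theorem mainTheorem16:
  fixes n :: nat and G :: "nat set"
  assumes "n \<ge> 1"
    and "gapset G"
    and "genus G = 3 * n + 1"
    and "pure_sparse (2 * n) G"
    and "depth G \<le> 3"
  shows "ell G (Max {i. 1 \<le> i \<and> i < genus G \<and> ell G (i+1) - ell G i = 2 * n})
           \<le> 2 * multiplicity G - 1"
proof -
  define A where "A = {i. 1 \<le> i \<and> i < genus G \<and> ell G (i+1) - ell G i = 2 * n}"
  have fin: "finite G" using assms(2) by (simp add: gapset_def)
  have "finite A" "A \<noteq> {}"
    using assms(4) by (auto simp: A_def pure_sparse_def genus_def)
  then have "Max A \<in> A" by simp
  then have \<alpha>: "1 \<le> Max A" "Max A < card G" "ell G (Max A + 1) = ell G (Max A) + 2 * n"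
    using assms(1) by (auto simp: A_def genus_def)
  define x where "x = ell G (Max A)"
  have x: "x \<in> G" using \<alpha> ell_mem[OF fin] by (simp add: x_def)
  have y: "x + 2 * n \<in> G" using \<alpha> ell_mem[OF fin, of "Max A + 1"] by (simp add: x_def)
  have y3m: "x + 2 * n < 3 * multiplicity G"
    using less_conductor_if_mem[OF fin y] conductor_le_if_depth_le[OF fin assms(5)] by simp
  show ?thesis
  proof (rule ccontr)
    assume "\<not> ?thesis"
    then have x2m: "2 * multiplicity G \<le> x" by (simp add: A_def x_def)
    have "x + 2 * n + 3 \<le> 2 * (3 * n + 1)"
      using twice_genus_ge_if_large_gaps[OF assms(2) x y _ x2m y3m] assms(1,3) by simp
    then show False using x2m y3m by presburger
  qed
qed

end
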